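(* Consider Algorithm 1 (described in the context) run on a strongly connected digraph $\mathcal{G}_d$ with edge bounds $l_{ji},u_{ji}$, under any realization of transmission delays bounded by $\overline{\tau}<\infty$. Then for all $k\ge0$, $0\le\varepsilon[k+1]\le\varepsilon[k]$.
   Context: Setting: $\mathcal{G}_d=(\mathcal{V},\mathcal{E})$ is a strongly connected digraph, $\mathcal{V}=\{v_1,\dots,v_n\}$, $n\ge2$; an edge $(v_j,v_i)$ carries flow from $v_i$ to $v_j$. $\mathcal{N}_j^-=\{v_i:(v_j,v_i)\in\mathcal{E}\}$, $\mathcal{N}_j^+=\{v_l:(v_l,v_j)\in\mathcal{E}\}$, $\mathcal{D}_j=|\mathcal{N}_j^-|+|\mathcal{N}_j^+|$. Each edge has real bounds $1\le l_{ji}\le u_{ji}$. Communication is bidirectional along every edge. Projection: $[x]_{ji}=\max\{\lceil l_{ji}\rceil,\min\{\lfloor u_{ji}\rfloor,x\}\}$. State: for each edge $(v_l,v_j)$, the tail $v_j$ holds the actual flow $f_{lj}[k]$; for each edge $(v_j,v_i)$, the head $v_j$ holds a perceived flow $f^{(p)}_{ji}[k]$. Actual balance $b_j[k]=\sum_{v_i\in\mathcal{N}_j^-}f_{ji}[k]-\sum_{v_l\in\mathcal{N}_j^+}f_{lj}[k]$; perceived balance $b^{(p)}_j[k]=\sum_{v_i\in\mathcal{N}_j^-}f^{(p)}_{ji}[k]-\sum_{v_l\in\mathcal{N}_j^+}f_{lj}[k]$; total imbalance $\varepsilon[k]=\sum_j|b_j[k]|$. Algorithm 1. Initialization: $f_{ji}[0]=f^{(p)}_{ji}[0]=\lceil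 l_{ji}\rceil$ for all edges; each $v_j$ fixes a cyclic order of its $\mathcal{D}_j$ incident (incoming and outgoing) edges and a pointer into it. Iteration $k=0,1,2,\dots$, at each node $v_j$: (1) compute $b^{(p)}_j[k]$. (2) If $b^{(p)}_j[k]>0$, starting at the pointer and cycling through the order, visit edges one at a time: at an outgoing edge $(v_l,v_j)$, if $f_{lj}[k]+c^{(j)}_{lj}[k]<\lfloor u_{lj}\rfloor$ add $1$ to $c^{(j)}_{lj}[k]$; at an incoming edge $(v_j,v_i)$, if $f^{(p)}_{ji}[k]+c^{(j)}_{ji}[k]>\lceil l_{ji}\rceil$ subtract $1$ from $c^{(j)}_{ji}[k]$ (the $c$'s start at $0$; edges at their limit are skipped); stop as soon as the total number of unit changes equals $b^{(p)}_j[k]$, leaving the pointer at the next edge. If $b^{(p)}_j[k]\le 0$, all $c^{(j)}[k]=0$. (3) $v_j$ transmits $c^{(j)}_{lj}[k]$ to each out-neighbor $v_l$ and $c^{(j)}_{ji}[k]$ to each in-neighbor $v_i$. A message sent at step $k$ over a link in a given direction is delivered at step $k+\tau$, where the integer $\tau\in[0,\overline{\tau}]$ is arbitrary (unknown, time-varying, independent across links and directions). (4) $v_j$ forms $\overline{c}^{(l)}_{lj}[k]$ (resp. $\overline{c}^{(i)}_{ji}[k]$) as the sum of all values $c^{(l)}_{lj}[k_0]$ (resp. $c^{(i)}_{ji}[k_0]$) sent by $v_l$ (resp. $v_i$) that are delivered at step $k$ (zero if none). (5)–(6) $f_{lj}[k+1]=[f_{lj}[k]+c^{(j)}_{lj}[k]+\overline{c}^{(l)}_{lj}[k]]_{lj}$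 and $f^{(p)}_{ji}[k+1]=[f^{(p)}_{ji}[k]+c^{(j)}_{ji}[k]+\overline{c}^{(i)}_{ji}[k]]_{ji}$. *)

theory Defs
  imports Complex_Main
begin

text \<open>Edges are pairs (j,i) carrying flow from i to j.  For an edge e = (j,i):
  the head is fst e = j (holds the perceived flow), the tail is snd e = i
  (holds the actual flow).\<close>

definition proj :: "('v \<times> 'v \<Rightarrow> real) \<Rightarrow> ('v \<times> 'v \<Rightarrow> real) \<Rightarrow> 'v \<times> 'v \<Rightarrow> int \<Rightarrow> int" where
  "proj l u e x = max \<lceil>l e\<rceil> (min \<lfloor>u e\<rfloor> x)"

definition balance :: "('v \<times> 'v) set \<Rightarrow> ('v \<times> 'v \<Rightarrow> int) \<Rightarrow> 'v \<Rightarrow> int" where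
  "balance E f j = (\<Sum>e\<in>{e\<in>E. fst e = j}. f e) - (\<Sum>e\<in>{e\<in>E. snd e = j}. f e)"

definition pbalance :: "('v \<times> 'v) set \<Rightarrow> ('v \<times> 'v \<Rightarrow> int) \<Rightarrow> ('v \<times> 'v \<Rightarrow> int) \<Rightarrow> 'v \<Rightarrow> int" where
  "pbalance E f fp j = (\<Sum>e\<in>{e\<in>E. fst e = j}. fp e) - (\<Sum>e\<in>{e\<in>E. snd e = j}. f e)"

definition total_imbalance :: "'v set \<Rightarrow> ('v \<times> 'v) set \<Rightarrow> ('v \<times> 'v \<Rightarrow> int) \<Rightarrow> int" where
  "total_imbalance V E f = (\<Sum>j\<in>V. \<bar>balance E f j\<bar>)"

definition incident :: "('v \<times> 'v) set \<Rightarrow> 'v \<Rightarrow> ('v \<times> 'v) set" where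
  "incident E j = {e\<in>E. fst e = j \<or> snd e = j}"

text \<open>State: (pointer, changes c, number of
  unit changes made so far).  L is the cyclic order of j's incident edges, f / fp
  the current actual / perceived flows.\<close>
definition visit :: "('v \<times> 'v \<Rightarrow> real) \<Rightarrow> ('v \<times> 'v \<Rightarrow> real) \<Rightarrow> 'v \<Rightarrow> ('v \<times> 'v) list
    \<Rightarrow> ('v \<times> 'v \<Rightarrow> int) \<Rightarrow> ('v \<times> 'v \<Rightarrow> int)
    \<Rightarrow> nat \<times> ('v \<times> 'v \<Rightarrow> int) \<times> int \<Rightarrow> nat \<times> ('v \<times> 'v \<Rightarrow> int) \<times> int" where
  "visit l u j L f fp st =
    (case st of (p, c, cnt) \<Rightarrow>
      (let e = L ! p; p' = Suc p mod length L in
       if snd e = j then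
         (if f e + c e < \<lfloor>u e\<rfloor> then (p', c(e := c e + 1), cnt + 1) else (p', c, cnt))
       else
         (if fp e + c e > \<lceil>l e\<rceil> then (p', c(e := c e - 1), cnt + 1) else (p', c, cnt))))"

text \<open>Sum of all values sent by node s to node r on edge e that are delivered at step k;
  d s r k0 is the delay of the message sent from s to r at step k0.\<close>
definition delivered :: "(nat \<Rightarrow> 'v \<Rightarrow> 'v \<times> 'v \<Rightarrow> int) \<Rightarrow> ('v \<Rightarrow> 'v \<Rightarrow> nat \<Rightarrow> nat)
    \<Rightarrow> 'v \<Rightarrow> 'v \<Rightarrow> 'v \<times> 'v \<Rightarrow> nat \<Rightarrow> int" where
  "delivered c d s r e k = (\<Sum>k0\<in>{k0. k0 \<le> k \<and> k0 + d s r k0 = k}. c k0 s e)"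

end

theory Submission
  imports Defs
begin

(* The projection never clips: by induction on k, both flows of an edge stay in
   [ceil l, max (ceil l) (floor u)], and the actual flow exceeds the flow perceived by the
   head by exactly the commands still in transit (the tail's increments minus the head's
   decrements not yet delivered).  Hence b_j changes by received - shed, where shed is what
   j's own commands take away from b_j and received is what its neighbours' commands add;
   both are nonnegative and have equal sums over all nodes.  A node with negative perceived
   balance has never issued a command, so it sheds nothing; otherwise it sheds its perceived
   balance minus the change of its own decrements in transit, which is at most its actual
   balance.  Thus |b_j| loses shed and gains at most received, and summing over j gives
   eps[k+1] <= eps[k]. *)

lemma sum_fun_upd_add:
  fixes c :: "'a \<Rightarrow> 'b::comm_monoid_add"
  assumes "finite S"
  shows "sum (c(e := c e + x)) S = sum c S + (if e \<in> S then x else 0)"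
proof -
  have "c(e := c e + x) = (\<lambda>y. c y + (if y = e then x else 0))"
    by auto
  then show ?thesis
    using assms by (simp add: sum.distrib)
qed

definition visit_inv :: "('v \<times> 'v) set \<Rightarrow> ('v \<times> 'v \<Rightarrow> real) \<Rightarrow> ('v \<times> 'v \<Rightarrow> real) \<Rightarrow> 'v
    \<Rightarrow> ('v \<times> 'v) list \<Rightarrow> ('v \<times> 'v \<Rightarrow> int) \<Rightarrow> ('v \<times> 'v \<Rightarrow> int)
    \<Rightarrow> nat \<times> ('v \<times> 'v \<Rightarrow> int) \<times> int \<Rightarrow> bool" where
  "visit_inv E l u j L f fp = (\<lambda>(p, c, cnt).
     p < length L \<and>
     cnt = (\<Sum>e\<in>{e\<in>E. snd e = j}. c e) - (\<Sum>e\<in>{e\<in>E. fst e = j}. c e) \<and>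
     (\<forall>e. snd e = j \<longrightarrow> 0 \<le> c e \<and> (c e = 0 \<or> f e + c e \<le> \<lfloor>u e\<rfloor>)) \<and>
     (\<forall>e. snd e \<noteq> j \<longrightarrow> c e \<le> 0 \<and> (c e = 0 \<or> \<lceil>l e\<rceil> \<le> fp e + c e)))"

lemma visit_inv_start: "p < length L \<Longrightarrow> visit_inv E l u j L f fp (p, \<lambda>_. 0, 0)"
  by (simp add: visit_inv_def)

lemma visit_inv_visit:
  assumes "finite E" and "set L \<subseteq> E" and "\<forall>e\<in>set L. fst e = j \<or> snd e = j"
    and "\<forall>v. (v, v) \<notin> E"
    and "visit_inv E l u j L f fp st"
  shows "visit_inv E l u j L f fp (visit l u j L f fp st)"
proof -
  obtain p c cnt where st: "st = (p, c, cnt)"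
    by (cases st)
  define e where "e = L ! p"
  have p: "p < length L"
    using assms(5) by (simp add: st visit_inv_def)
  then have "e \<in> E" "Suc p mod length L < length L"
    using assms(2) by (auto simp: e_def intro: mod_less_divisor)
  moreover have "fst e \<noteq> j" if "snd e = j"
    using assms(4) \<open>e \<in> E\<close> that by (cases e) auto
  moreover have "fst e = j" if "snd e \<noteq> j"
    using assms(3) p that by (auto simp: e_def)
  ultimately show ?thesis
    using assms(1,5) sum_fun_upd_add[of _ c e 1] sum_fun_upd_add[of _ c e "-1"]
    by (auto simp: st visit_def visit_inv_def Let_def e_def[symmetric] simp del: split_paired_All)
qed

lemma visit_inv_funpow:
  assumes "finite E" and "set L \<subseteq> E" and "\<forall>e\<in>set L. fst e = j \<or> snd e = j"
    and "\<forall>v. (v, v) \<notin> E"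
    and "visit_inv E l u j L f fp st"
  shows "visit_inv E l u j L f fp ((visit l u j L f fp ^^ m) st)"
  by (induction m) (simp_all add: assms visit_inv_visit)

(* Not just floor u: when [l, u] contains no integer, proj maps everything to ceil l. *)
definition flow_cap :: "('v \<times> 'v \<Rightarrow> real) \<Rightarrow> ('v \<times> 'v \<Rightarrow> real) \<Rightarrow> 'v \<times> 'v \<Rightarrow> int" where
  "flow_cap l u e = max \<lceil>l e\<rceil> \<lfloor>u e\<rfloor>"

lemma proj_eq_self: "\<lceil>l e\<rceil> \<le> x \<Longrightarrow> x \<le> flow_cap l u e \<Longrightarrow> proj l u e x = x"
  unfolding proj_def flow_cap_def by linarith

definition in_flight :: "(nat \<Rightarrow> 'v \<Rightarrow> 'v \<times> 'v \<Rightarrow> int) \<Rightarrow> ('v \<Rightarrow> 'v \<Rightarrow> nat \<Rightarrow> nat)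
    \<Rightarrow> 'v \<Rightarrow> 'v \<Rightarrow> 'v \<times> 'v \<Rightarrow> nat \<Rightarrow> int" where
  "in_flight c d s r e k = (\<Sum>k0\<in>{k0. k0 < k \<and> k \<le> k0 + d s r k0}. c k0 s e)"

lemma in_flight_0 [simp]: "in_flight c d s r e 0 = 0"
  by (simp add: in_flight_def)

lemma in_flight_Suc:
  "in_flight c d s r e (Suc k) = in_flight c d s r e k + c k s e - delivered c d s r e k"
proof -
  let ?g = "\<lambda>k0. c k0 s e"
  define pending where "pending = {k0. k0 < k \<and> k \<le> k0 + d s r k0}"
  define pending' where "pending' = {k0. k0 < Suc k \<and> Suc k \<le> k0 + d s r k0}"
  define arriving where "arriving = {k0. k0 \<le> k \<and> k0 + d s r k0 = k}"
  have "finite pending" "finite pending'" "finite arriving"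
    unfolding pending_def pending'_def arriving_def
    by (auto intro: finite_subset[of _ "{..k}"])
  moreover have "insert k pending = pending' \<union> arriving" "k \<notin> pending" "pending' \<inter> arriving = {}"
    unfolding pending_def pending'_def arriving_def by auto
  ultimately have "?g k + sum ?g pending = sum ?g pending' + sum ?g arriving"
    by (metis sum.insert sum.union_disjoint)
  then show ?thesis
    unfolding in_flight_def delivered_def
    by (simp add: pending_def[symmetric] pending'_def[symmetric] arriving_def[symmetric])
qed

locale greedy_run =
  fixes V :: "'v set" and E :: "('v \<times> 'v) set"
    and l u :: "'v \<times> 'v \<Rightarrow> real"
    and ord :: "'v \<Rightarrow> ('v \<times> 'v) list"
    and d :: "'v \<Rightarrow> 'v \<Rightarrow> nat \<Rightarrow> nat"
    and f fp :: "nat \<Rightarrow> 'v \<times> 'v \<Rightarrow> int"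
    and c :: "nat \<Rightarrow> 'v \<Rightarrow> 'v \<times> 'v \<Rightarrow> int"
    and ptr :: "nat \<Rightarrow> 'v \<Rightarrow> nat"
  assumes finV: "finite V"
    and EV: "E \<subseteq> V \<times> V" and noloop: "\<forall>v. (v, v) \<notin> E"
    and order: "\<forall>j\<in>V. set (ord j) = incident E j"
    and init_f: "\<forall>e\<in>E. f 0 e = \<lceil>l e\<rceil> \<and> fp 0 e = \<lceil>l e\<rceil>"
    and init_ptr: "\<forall>j\<in>V. ptr 0 j < length (ord j)"
    and step_pos: "\<forall>k. \<forall>j\<in>V. pbalance E (f k) (fp k) j > 0 \<longrightarrow>
        (\<exists>m. (visit l u j (ord j) (f k) (fp k) ^^ m) (ptr k j, \<lambda>_. 0, 0)
               = (ptr (Suc k) j, c k j, pbalance E (f k) (fp k) j))"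
    and step_nonpos: "\<forall>k. \<forall>j\<in>V. pbalance E (f k) (fp k) j \<le> 0 \<longrightarrow>
        ptr (Suc k) j = ptr k j \<and> (\<forall>e. c k j e = 0)"
    and upd_f: "\<forall>k. \<forall>e\<in>E. f (Suc k) e =
        proj l u e (f k e + c k (snd e) e + delivered c d (fst e) (snd e) e k)"
    and upd_fp: "\<forall>k. \<forall>e\<in>E. fp (Suc k) e =
        proj l u e (fp k e + c k (fst e) e + delivered c d (snd e) (fst e) e k)"
begin

abbreviation pb :: "nat \<Rightarrow> 'v \<Rightarrow> int" where
  "pb k \<equiv> pbalance E (f k) (fp k)"

lemma finite_E: "finite E"
  using finV EV finite_subset by blast

lemma edge_ends_in_V: "e \<in> E \<Longrightarrow> fst e \<in> V \<and> snd e \<in> V"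
  using EV by auto

lemma head_ne_tail: "e \<in> E \<Longrightarrow> fst e \<noteq> snd e"
  using noloop by (cases e) auto

lemma node_step_inv_if_ptr_valid:
  assumes "j \<in> V" and "ptr k j < length (ord j)"
  shows "visit_inv E l u j (ord j) (f k) (fp k) (ptr (Suc k) j, c k j, max (pb k j) 0)"
proof (cases "pb k j > 0")
  case True
  then obtain m where "(visit l u j (ord j) (f k) (fp k) ^^ m) (ptr k j, \<lambda>_. 0, 0)
      = (ptr (Suc k) j, c k j, pb k j)"
    using step_pos assms(1) by blast
  moreover have "visit_inv E l u j (ord j) (f k) (fp k)
      ((visit l u j (ord j) (f k) (fp k) ^^ m) (ptr k j, \<lambda>_. 0, 0))"
    using assms order finite_E noloop
    by (intro visit_inv_funpow visit_inv_start) (auto simp: incident_def)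
  ultimately show ?thesis
    using True by simp
next
  case False
  then have "ptr (Suc k) j = ptr k j" and "c k j = (\<lambda>_. 0)"
    using step_nonpos assms(1) by auto
  then show ?thesis
    using False assms(2) by (simp add: visit_inv_def)
qed

lemma ptr_valid: "j \<in> V \<Longrightarrow> ptr k j < length (ord j)"
  by (induction k) (use init_ptr node_step_inv_if_ptr_valid in \<open>auto simp: visit_inv_def\<close>)

lemma node_step_inv:
  "j \<in> V \<Longrightarrow> visit_inv E l u j (ord j) (f k) (fp k) (ptr (Suc k) j, c k j, max (pb k j) 0)"
  by (simp add: node_step_inv_if_ptr_valid ptr_valid)

lemma command_count:
  "j \<in> V \<Longrightarrow> max (pb k j) 0 =
     (\<Sum>e\<in>{e\<in>E. snd e = j}. c k j e) - (\<Sum>e\<in>{e\<in>E. fst e = j}. c k j e)"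
  using node_step_inv by (simp add: visit_inv_def)

lemma command_out_nonneg: "j \<in> V \<Longrightarrow> snd e = j \<Longrightarrow> 0 \<le> c k j e"
  using node_step_inv[of j k] by (simp add: visit_inv_def del: split_paired_All)

lemma command_in_nonpos: "j \<in> V \<Longrightarrow> snd e \<noteq> j \<Longrightarrow> c k j e \<le> 0"
  using node_step_inv[of j k] by (simp add: visit_inv_def del: split_paired_All)

lemma command_out_le_cap:
  "j \<in> V \<Longrightarrow> snd e = j \<Longrightarrow> f k e \<le> flow_cap l u e \<Longrightarrow> f k e + c k j e \<le> flow_cap l u e"
  using node_step_inv[of j k] by (fastforce simp: visit_inv_def flow_cap_def simp del: split_paired_All)

lemma command_in_ge_lower:
  "j \<in> V \<Longrightarrow> snd e \<noteq> j \<Longrightarrow> \<lceil>l e\<rceil> \<le> fp k e \<Longrightarrow> \<lceil>l e\<rceil> \<le> fp k e + c k j e"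
  using node_step_inv[of j k] by (fastforce simp: visit_inv_def simp del: split_paired_All)

lemma in_flight_from_tail_nonneg: "e \<in> E \<Longrightarrow> 0 \<le> in_flight c d (snd e) r e k"
  unfolding in_flight_def by (intro sum_nonneg) (simp add: command_out_nonneg edge_ends_in_V)

lemma in_flight_from_head_nonpos: "e \<in> E \<Longrightarrow> in_flight c d (fst e) r e k \<le> 0"
  unfolding in_flight_def
  using head_ne_tail[of e] by (intro sum_nonpos) (simp add: command_in_nonpos edge_ends_in_V)

lemma delivered_from_tail_nonneg: "e \<in> E \<Longrightarrow> 0 \<le> delivered c d (snd e) r e k"
  unfolding delivered_def by (intro sum_nonneg) (simp add: command_out_nonneg edge_ends_in_V)

lemma delivered_from_head_nonpos: "e \<in> E \<Longrightarrow> delivered c d (fst e) r e k \<le> 0"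
  unfolding delivered_def
  using head_ne_tail[of e] by (intro sum_nonpos) (simp add: command_in_nonpos edge_ends_in_V)

definition consistent :: "nat \<Rightarrow> bool" where
  "consistent k \<longleftrightarrow> (\<forall>e\<in>E. \<lceil>l e\<rceil> \<le> fp k e \<and> f k e \<le> flow_cap l u e \<and>
     f k e - fp k e = in_flight c d (snd e) (fst e) e k - in_flight c d (fst e) (snd e) e k)"

lemma unclipped_updates_within_bounds:
  assumes "consistent k" and "e \<in> E"
  defines "x \<equiv> f k e + c k (snd e) e + delivered c d (fst e) (snd e) e k"
    and "y \<equiv> fp k e + c k (fst e) e + delivered c d (snd e) (fst e) e k"
  shows "\<lceil>l e\<rceil> \<le> x" "x \<le> flow_cap l u e" "\<lceil>l e\<rceil> \<le> y" "y \<le> flow_cap l u e"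
proof -
  have ends: "fst e \<in> V" "snd e \<in> V" "fst e \<noteq> snd e"
    using assms(2) edge_ends_in_V head_ne_tail by auto
  have fp_ge: "\<lceil>l e\<rceil> \<le> fp k e" and f_le: "f k e \<le> flow_cap l u e"
    and gap: "f k e - fp k e = in_flight c d (snd e) (fst e) e k - in_flight c d (fst e) (snd e) e k"
    using assms(1,2) by (auto simp: consistent_def)
  have "f k e + c k (snd e) e \<le> flow_cap l u e" "\<lceil>l e\<rceil> \<le> fp k e + c k (fst e) e"
    using ends fp_ge f_le by (simp_all add: command_out_le_cap command_in_ge_lower)
  moreover have "0 \<le> c k (snd e) e" "c k (fst e) e \<le> 0"
    using ends by (simp_all add: command_out_nonneg command_in_nonpos)
  moreover have "0 \<le> delivered c d (snd e) (fst e) e k" "delivered c d (fst e) (snd e) e k \<le> 0"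
    using assms(2) by (simp_all add: delivered_from_tail_nonneg delivered_from_head_nonpos)
  moreover have "0 \<le> in_flight c d (snd e) (fst e) e k'" "in_flight c d (fst e) (snd e) e k' \<le> 0" for k'
    using assms(2) by (simp_all add: in_flight_from_tail_nonneg in_flight_from_head_nonpos)
  moreover note in_flight_Suc[of c d "snd e" "fst e" e k] in_flight_Suc[of c d "fst e" "snd e" e k]
  ultimately show "\<lceil>l e\<rceil> \<le> x" "x \<le> flow_cap l u e" "\<lceil>l e\<rceil> \<le> y" "y \<le> flow_cap l u e"
    unfolding x_def y_def using gap by (smt (verit))+
qed

lemma updates_unclipped:
  assumes "consistent k" and "e \<in> E"
  shows "f (Suc k) e = f k e + c k (snd e) e + delivered c d (fst e) (snd e) e k"
    and "fp (Suc k) e = fp k e + c k (fst e) e + delivered c d (snd e) (fst e) e k"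
  using unclipped_updates_within_bounds[OF assms] upd_f upd_fp assms(2)
  by (simp_all add: proj_eq_self)

lemma consistent_Suc:
  assumes "consistent k"
  shows "consistent (Suc k)"
  unfolding consistent_def
proof
  fix e assume "e \<in> E"
  have "f k e - fp k e = in_flight c d (snd e) (fst e) e k - in_flight c d (fst e) (snd e) e k"
    using assms \<open>e \<in> E\<close> by (simp add: consistent_def)
  then show "\<lceil>l e\<rceil> \<le> fp (Suc k) e \<and> f (Suc k) e \<le> flow_cap l u e \<and> f (Suc k) e - fp (Suc k) e =
      in_flight c d (snd e) (fst e) e (Suc k) - in_flight c d (fst e) (snd e) e (Suc k)"
    using unclipped_updates_within_bounds[OF assms \<open>e \<in> E\<close>]
    by (simp add: updates_unclipped[OF assms \<open>e \<in> E\<close>] in_flight_Suc)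
qed

lemma consistent: "consistent k"
proof (induction k)
  case 0
  then show ?case
    by (simp add: consistent_def flow_cap_def init_f)
qed (rule consistent_Suc)

lemma f_Suc: "e \<in> E \<Longrightarrow> f (Suc k) e = f k e + c k (snd e) e + delivered c d (fst e) (snd e) e k"
  by (simp add: updates_unclipped consistent)

lemma fp_Suc: "e \<in> E \<Longrightarrow> fp (Suc k) e = fp k e + c k (fst e) e + delivered c d (snd e) (fst e) e k"
  by (simp add: updates_unclipped consistent)

lemma flow_gap:
  "e \<in> E \<Longrightarrow> f k e - fp k e = in_flight c d (snd e) (fst e) e k - in_flight c d (fst e) (snd e) e k"
  using consistent by (simp add: consistent_def)

lemma pb_Suc_ge:
  assumes "j \<in> V"
  shows "min (pb k j) 0 \<le> pb (Suc k) j"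
proof -
  let ?In = "{e\<in>E. fst e = j}" and ?Out = "{e\<in>E. snd e = j}"
  have "pb (Suc k) j = pb k j - ((\<Sum>e\<in>?Out. c k j e) - (\<Sum>e\<in>?In. c k j e))
      + (\<Sum>e\<in>?In. delivered c d (snd e) (fst e) e k) - (\<Sum>e\<in>?Out. delivered c d (fst e) (snd e) e k)"
    by (simp add: pbalance_def fp_Suc f_Suc sum.distrib)
  moreover have "0 \<le> (\<Sum>e\<in>?In. delivered c d (snd e) (fst e) e k)"
    by (intro sum_nonneg) (simp add: delivered_from_tail_nonneg)
  moreover have "(\<Sum>e\<in>?Out. delivered c d (fst e) (snd e) e k) \<le> 0"
    by (intro sum_nonpos) (simp add: delivered_from_head_nonpos)
  ultimately show ?thesis
    using command_count[OF assms, of k] by linarith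
qed

lemma commands_vanish_while_pb_negative:
  assumes "j \<in> V" and "pb k j < 0" and "k0 \<le> k"
  shows "c k0 j e = 0"
proof -
  have "pb k0 j < 0"
    using assms(3,2)
  proof (induction k0 rule: inc_induct)
    case (step n)
    then show ?case
      using pb_Suc_ge[OF assms(1), of n] by linarith
  qed
  then show ?thesis
    using step_nonpos assms(1) by (meson less_imp_le)
qed

lemma sum_group_heads: "(\<Sum>j\<in>V. \<Sum>e\<in>{e\<in>E. fst e = j}. g e) = sum g E"
  by (rule sum.group[OF finite_E finV]) (use EV in auto)

lemma sum_group_tails: "(\<Sum>j\<in>V. \<Sum>e\<in>{e\<in>E. snd e = j}. g e) = sum g E"
  by (rule sum.group[OF finite_E finV]) (use EV in auto)

definition shed :: "nat \<Rightarrow> 'v \<Rightarrow> int" where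
  "shed k j = (\<Sum>e\<in>{e\<in>E. snd e = j}. c k (snd e) e)
     - (\<Sum>e\<in>{e\<in>E. fst e = j}. delivered c d (fst e) (snd e) e k)"

definition received :: "nat \<Rightarrow> 'v \<Rightarrow> int" where
  "received k j = (\<Sum>e\<in>{e\<in>E. fst e = j}. c k (snd e) e)
     - (\<Sum>e\<in>{e\<in>E. snd e = j}. delivered c d (fst e) (snd e) e k)"

lemma balance_Suc: "balance E (f (Suc k)) j = balance E (f k) j - shed k j + received k j"
  by (simp add: balance_def shed_def received_def f_Suc sum.distrib)

lemma shed_nonneg: "0 \<le> shed k j"
proof -
  have "0 \<le> (\<Sum>e\<in>{e\<in>E. snd e = j}. c k (snd e) e)"
    by (intro sum_nonneg) (auto intro: command_out_nonneg dest: edge_ends_in_V)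
  moreover have "(\<Sum>e\<in>{e\<in>E. fst e = j}. delivered c d (fst e) (snd e) e k) \<le> 0"
    using delivered_from_head_nonpos by (intro sum_nonpos) auto
  ultimately show ?thesis
    by (simp add: shed_def)
qed

lemma received_nonneg: "0 \<le> received k j"
proof -
  have "0 \<le> (\<Sum>e\<in>{e\<in>E. fst e = j}. c k (snd e) e)"
    by (intro sum_nonneg) (simp add: command_out_nonneg edge_ends_in_V)
  moreover have "(\<Sum>e\<in>{e\<in>E. snd e = j}. delivered c d (fst e) (snd e) e k) \<le> 0"
    by (intro sum_nonpos) (simp add: delivered_from_head_nonpos)
  ultimately show ?thesis
    by (simp add: received_def)
qed

lemma sum_shed_eq_sum_received: "(\<Sum>j\<in>V. shed k j) = (\<Sum>j\<in>V. received k j)"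
  unfolding shed_def received_def sum_subtractf sum_group_heads sum_group_tails ..

lemma shed_le_balance:
  assumes "j \<in> V"
  shows "shed k j = 0 \<or> shed k j \<le> balance E (f k) j"
proof (cases "pb k j < 0")
  case True
  then show ?thesis
    using commands_vanish_while_pb_negative[OF assms True]
    by (simp add: shed_def delivered_def)
next
  case False
  let ?In = "{e\<in>E. fst e = j}" and ?Out = "{e\<in>E. snd e = j}"
  have "shed k j = pb k j + (\<Sum>e\<in>?In. in_flight c d j (snd e) e (Suc k))
      - (\<Sum>e\<in>?In. in_flight c d j (snd e) e k)"
    using command_count[OF assms, of k] False
    by (simp add: shed_def in_flight_Suc sum.distrib sum_subtractf)
  moreover have "(\<Sum>e\<in>?In. in_flight c d j (snd e) e (Suc k)) \<le> 0"
    using in_flight_from_head_nonpos by (intro sum_nonpos) auto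
  moreover have "balance E (f k) j - pb k j
      = (\<Sum>e\<in>?In. in_flight c d (snd e) j e k) - (\<Sum>e\<in>?In. in_flight c d j (snd e) e k)"
    by (simp add: balance_def pbalance_def flow_gap sum_subtractf[symmetric])
  moreover have "0 \<le> (\<Sum>e\<in>?In. in_flight c d (snd e) j e k)"
    using in_flight_from_tail_nonneg by (intro sum_nonneg) auto
  ultimately show ?thesis
    by linarith
qed

lemma total_imbalance_Suc_le: "total_imbalance V E (f (Suc k)) \<le> total_imbalance V E (f k)"
proof -
  have "total_imbalance V E (f (Suc k)) = (\<Sum>j\<in>V. \<bar>balance E (f k) j - shed k j + received k j\<bar>)"
    by (simp add: total_imbalance_def balance_Suc)
  also have "\<dots> \<le> (\<Sum>j\<in>V. \<bar>balance E (f k) j\<bar> - shed k j + received k j)"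
    using shed_le_balance shed_nonneg received_nonneg
    by (intro sum_mono) (smt (verit))
  also have "\<dots> = total_imbalance V E (f k)"
    by (simp add: total_imbalance_def sum.distrib sum_subtractf sum_shed_eq_sum_received)
  finally show ?thesis .
qed

end


theorem proposition3:
  fixes V :: "'v set" and E :: "('v \<times> 'v) set"
    and l u :: "'v \<times> 'v \<Rightarrow> real"
    and ord :: "'v \<Rightarrow> ('v \<times> 'v) list"
    and d :: "'v \<Rightarrow> 'v \<Rightarrow> nat \<Rightarrow> nat" and taubar :: nat
    and f fp :: "nat \<Rightarrow> 'v \<times> 'v \<Rightarrow> int"
    and c :: "nat \<Rightarrow> 'v \<Rightarrow> 'v \<times> 'v \<Rightarrow> int"
    and ptr :: "nat \<Rightarrow> 'v \<Rightarrow> nat"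
  assumes finV: "finite V" and cardV: "card V \<ge> 2"
    and EV: "E \<subseteq> V \<times> V" and noloop: "\<forall>v. (v, v) \<notin> E"
    and strong: "\<forall>x\<in>V. \<forall>y\<in>V. (x, y) \<in> E\<^sup>*"
    and bounds: "\<forall>e\<in>E. 1 \<le> l e \<and> l e \<le> u e"
    and order: "\<forall>j\<in>V. distinct (ord j) \<and> set (ord j) = incident E j"
    and delay: "\<forall>s r k. d s r k \<le> taubar"
    and init_f: "\<forall>e\<in>E. f 0 e = \<lceil>l e\<rceil> \<and> fp 0 e = \<lceil>l e\<rceil>"
    and init_ptr: "\<forall>j\<in>V. ptr 0 j < length (ord j)"
    and step_pos: "\<forall>k. \<forall>j\<in>V. pbalance E (f k) (fp k) j > 0 \<longrightarrow>
        (\<exists>m. (visit l u j (ord j) (f k) (fp k) ^^ m) (ptr k j, \<lambda>_. 0, 0)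
               = (ptr (Suc k) j, c k j, pbalance E (f k) (fp k) j)
           \<and> (\<forall>m'<m. snd (snd ((visit l u j (ord j) (f k) (fp k) ^^ m') (ptr k j, \<lambda>_. 0, 0)))
                      \<noteq> pbalance E (f k) (fp k) j))"
    and step_nonpos: "\<forall>k. \<forall>j\<in>V. pbalance E (f k) (fp k) j \<le> 0 \<longrightarrow>
        ptr (Suc k) j = ptr k j \<and> (\<forall>e. c k j e = 0)"
    and upd_f: "\<forall>k. \<forall>e\<in>E. f (Suc k) e =
        proj l u e (f k e + c k (snd e) e + delivered c d (fst e) (snd e) e k)"
    and upd_fp: "\<forall>k. \<forall>e\<in>E. fp (Suc k) e =
        proj l u e (fp k e + c k (fst e) e + delivered c d (snd e) (fst e) e k)"
  shows "0 \<le> total_imbalance V E (f (Suc k)) \<and>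
         total_imbalance V E (f (Suc k)) \<le> total_imbalance V E (f k)"
  proof -
  interpret greedy_run V E l u ord d f fp c ptr
    by unfold_locales (use assms in meson)+
  show ?thesis
    using total_imbalance_Suc_le by (simp add: total_imbalance_def sum_nonneg)
qed

end
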